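(* Let $p$ be a prime and $n$ a positive integer with $p\geq n$. Then $$I_{p^n}=\Big(p,\prod_{i=0}^{p-1}(X-i)\Big)^n.$$ That is, the polynomials in $\mathbb{Z}[X]$ whose fixed divisor is divisible by $p^n$ are exactly the elements of the $n$-th power of the ideal generated by $p$ and $X(X-1)\cdots(X-(p-1))$.
   Context: $I_{p^n}=p^n\mathrm{Int}(\mathbb{Z})\cap\mathbb{Z}[X]=\{f\in\mathbb{Z}[X] : p^n\mid f(a)\text{ for all }a\in\mathbb{Z}\}$, where $\mathrm{Int}(\mathbb{Z})=\{f\in\mathbb{Q}[X]: f(\mathbb{Z})\subseteq\mathbb{Z}\}$. *)

theory Defs
  imports "HOL-Computational_Algebra.Polynomial"
begin

inductive_set ideal_gen :: "'a::comm_ring_1 set \<Rightarrow> 'a set" for S where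
  zero: "0 \<in> ideal_gen S"
| gen: "s \<in> S \<Longrightarrow> s \<in> ideal_gen S"
| add: "x \<in> ideal_gen S \<Longrightarrow> y \<in> ideal_gen S \<Longrightarrow> x + y \<in> ideal_gen S"
| mult: "x \<in> ideal_gen S \<Longrightarrow> r * x \<in> ideal_gen S"

definition ideal_mult :: "'a::comm_ring_1 set \<Rightarrow> 'a set \<Rightarrow> 'a set" where
  "ideal_mult I J = ideal_gen {a * b | a b. a \<in> I \<and> b \<in> J}"

primrec ideal_pow :: "'a::comm_ring_1 set \<Rightarrow> nat \<Rightarrow> 'a set" where
  "ideal_pow I 0 = UNIV"
| "ideal_pow I (Suc n) = ideal_mult (ideal_pow I n) I"

definition I_pn :: "int \<Rightarrow> nat \<Rightarrow> int poly set" where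
  "I_pn p n = {f. \<forall>a::int. p ^ n dvd poly f a}"

end

theory Submission
  imports Defs
begin

(* Expand f in the basis of falling factorials X(X-1)...(X-k+1).  Evaluating at a = 0, 1, 2, ...
   shows that p^n divides all values of f iff p^n divides b_k k! for every coefficient b_k.
   The product X(X-1)...(X-p+1) is congruent mod p to its shifts by multiples of p, so the
   falling factorial of length j p lies in J^j, where J = (p, X(X-1)...(X-p+1)).  Since n \<le> p,
   either k \<ge> n p, or k < p^2 and k! contains exactly j = k div p factors p, forcing p^(n-j) | b_k;
   either way b_k times the k-th falling factorial lies in J^n.  Conversely, every element of J
   takes values divisible by p, hence every element of J^n values divisible by p^n. *)

definition falling_poly :: "nat \<Rightarrow> int poly" where
  "falling_poly k = (\<Prod>i<k. [:- int i, 1:])"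

lemma poly_falling_poly: "poly (falling_poly k) x = (\<Prod>i<k. x - int i)"
  by (simp add: falling_poly_def poly_prod)

lemma degree_falling_poly: "degree (falling_poly k) = k"
  by (simp add: falling_poly_def degree_prod_sum_eq)

lemma lead_coeff_falling_poly: "lead_coeff (falling_poly k) = 1"
  by (simp add: falling_poly_def lead_coeff_prod)

lemma falling_poly_add:
  "falling_poly (a + b) = falling_poly a * (\<Prod>i<b. [:- int (a + i), 1:])"
  by (induction b) (simp_all only: falling_poly_def add_Suc_right add_0_right
      prod.lessThan_Suc lessThan_0 prod.empty mult_1_right mult.assoc)

lemma falling_poly_dvd: "k \<le> m \<Longrightarrow> falling_poly k dvd falling_poly m"
  unfolding falling_poly_def by (intro prod_dvd_prod_subset) auto

lemma fact_dvd_poly_falling_poly: "fact k dvd poly (falling_poly k) x"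
  unfolding poly_falling_poly lessThan_atLeast0 gbinomial_int_mult_fact[symmetric] by simp

lemma poly_falling_poly_self: "poly (falling_poly k) (int k) = fact k"
  using gbinomial_int_mult_fact[of k "int k"]
  by (simp add: poly_falling_poly lessThan_atLeast0 gbinomial_nneg)

lemma poly_falling_poly_eq_0: "m < k \<Longrightarrow> poly (falling_poly k) (int m) = 0"
  by (auto simp: poly_falling_poly intro!: prod_zero bexI[of _ m])

lemma falling_poly_expansion:
  fixes f :: "int poly"
  assumes "\<forall>i\<ge>N. coeff f i = 0"
  shows "\<exists>b. f = (\<Sum>k<N. smult (b k) (falling_poly k))"
  using assms
proof (induction N arbitrary: f)
  case 0
  then show ?case by (auto intro: poly_eqI)
next
  case (Suc N)
  define g where "g = f - smult (coeff f N) (falling_poly N)"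
  have "coeff g i = 0" if "N \<le> i" for i
  proof (cases "i = N")
    case True
    then show ?thesis using lead_coeff_falling_poly[of N] by (simp add: g_def degree_falling_poly)
  next
    case False
    then have "coeff (falling_poly N) i = 0"
      using that by (intro coeff_eq_0) (simp add: degree_falling_poly)
    then show ?thesis using Suc.prems that False by (simp add: g_def)
  qed
  then obtain b where "g = (\<Sum>k<N. smult (b k) (falling_poly k))"
    using Suc.IH by blast
  then have "f = (\<Sum>k<Suc N. smult ((b(N := coeff f N)) k) (falling_poly k))"
    by (simp add: g_def algebra_simps)
  then show ?case by blast
qed

lemma falling_poly_coeff_dvd:
  fixes q :: int
  assumes "\<forall>x. q dvd poly (\<Sum>k<N. smult (b k) (falling_poly k)) x" and "m < N"
  shows "q dvd b m * fact m"
  using assms(2)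
proof (induction m rule: less_induct)
  case (less m)
  \<comment> \<open>At x = m the terms with k > m vanish and those with k < m are divisible by q by induction.\<close>
  let ?term = "\<lambda>k. b k * poly (falling_poly k) (int m)"
  have "q dvd ?term k" if "k \<in> {..<N} - {m}" for k
  proof (cases "k < m")
    case True
    then have "q dvd b k * fact k" using less that by simp
    then show ?thesis using fact_dvd_poly_falling_poly by (meson dvd_trans mult_dvd_mono dvd_refl)
  next
    case False
    then show ?thesis using that by (simp add: poly_falling_poly_eq_0)
  qed
  then have "q dvd (\<Sum>k\<in>{..<N} - {m}. ?term k)" by (rule dvd_sum)
  moreover have "poly (\<Sum>k<N. smult (b k) (falling_poly k)) (int m)
      = ?term m + (\<Sum>k\<in>{..<N} - {m}. ?term k)"
    using less.prems by (simp add: poly_sum sum.remove)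
  moreover have "q dvd poly (\<Sum>k<N. smult (b k) (falling_poly k)) (int m)"
    using assms(1) by blast
  ultimately show ?case by (simp add: poly_falling_poly_self dvd_add_left_iff)
qed

lemma dvd_prod_diff:
  fixes f g :: "'b \<Rightarrow> 'a::comm_ring_1"
  assumes "\<And>i. i \<in> A \<Longrightarrow> q dvd f i - g i"
  shows "q dvd prod f A - prod g A"
proof (cases "finite A")
  case True
  then show ?thesis using assms
  proof (induction A rule: finite_induct)
    case (insert x A)
    have "prod f (insert x A) - prod g (insert x A)
        = f x * (prod f A - prod g A) + (f x - g x) * prod g A"
      using insert.hyps by (simp add: algebra_simps)
    then show ?case using insert by simp
  qed simp
qed simp

lemma falling_poly_shift_cong:
  "[:int m:] dvd (\<Prod>i<m. [:- int (t * m + i), 1:]) - falling_poly m"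
  unfolding falling_poly_def
proof (rule dvd_prod_diff)
  fix i
  have "[:- int (t * m + i), 1:] - [:- int i, 1:] = [:int m:] * [:- int t:]"
    by (simp add: algebra_simps)
  then show "[:int m:] dvd [:- int (t * m + i), 1:] - [:- int i, 1:]" by (rule dvdI)
qed

lemma ideal_pow_mult_left: "x \<in> ideal_pow I n \<Longrightarrow> r * x \<in> ideal_pow I n"
  by (cases n) (simp_all add: ideal_mult_def ideal_gen.mult)

lemma ideal_pow_sum:
  "(\<And>k. k \<in> A \<Longrightarrow> g k \<in> ideal_pow I n) \<Longrightarrow> sum g A \<in> ideal_pow I n"
  by (induction A rule: infinite_finite_induct; cases n)
    (auto simp: ideal_mult_def intro: ideal_gen.intros)

lemma ideal_pow_SucI: "x \<in> ideal_pow I n \<Longrightarrow> y \<in> I \<Longrightarrow> x * y \<in> ideal_pow I (Suc n)"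
  by (auto simp: ideal_mult_def intro!: ideal_gen.gen)

lemma ideal_pow_power_mult:
  "x \<in> ideal_pow I n \<Longrightarrow> y \<in> I \<Longrightarrow> y ^ m * x \<in> ideal_pow I (n + m)"
proof (induction m)
  case (Suc m)
  then have "(y ^ m * x) * y \<in> ideal_pow I (Suc (n + m))" by (intro ideal_pow_SucI) auto
  then show ?case by (simp add: algebra_simps)
qed simp

lemma ideal_gen_poly_dvd:
  assumes "g \<in> ideal_gen S" and "\<And>s a. s \<in> S \<Longrightarrow> q dvd poly s a"
  shows "q dvd poly g a"
  using assms by (induction g rule: ideal_gen.induct) auto

lemma ideal_pow_poly_dvd:
  assumes "\<And>g a. g \<in> I \<Longrightarrow> q dvd poly g a" and "g \<in> ideal_pow I n"
  shows "q ^ n dvd poly g a"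
  using assms(2)
proof (induction n arbitrary: g a)
  case (Suc n)
  then have "g \<in> ideal_gen {x * y |x y. x \<in> ideal_pow I n \<and> y \<in> I}"
    by (simp add: ideal_mult_def)
  then show ?case
    by (rule ideal_gen_poly_dvd)
      (auto simp del: power_Suc simp add: power_Suc2 intro!: mult_dvd_mono Suc.IH assms(1))
qed simp

definition falling_ideal :: "nat \<Rightarrow> int poly set" where
  "falling_ideal p = ideal_gen {[:int p:], falling_poly p}"

lemma poly_dvd_of_mem_falling_ideal:
  assumes "0 < p" and "g \<in> falling_ideal p"
  shows "int p dvd poly g a"
proof -
  have "p dvd fact p" using assms(1) by (simp add: dvd_fact)
  then have "int p dvd fact p" by (metis int_dvd_int_iff of_nat_fact)
  then have "int p dvd poly (falling_poly p) x" for x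
    using fact_dvd_poly_falling_poly dvd_trans by blast
  then show ?thesis
    using assms(2) unfolding falling_ideal_def by (auto elim!: ideal_gen_poly_dvd)
qed

lemma falling_poly_mult_mem_falling_ideal_pow:
  "falling_poly (j * p) \<in> ideal_pow (falling_ideal p) j"
proof (induction j)
  case (Suc j)
  obtain r where r: "(\<Prod>i<p. [:- int (j * p + i), 1:]) = falling_poly p + [:int p:] * r"
    using falling_poly_shift_cong[of p j] by (auto elim!: dvdE simp: algebra_simps)
  have "falling_poly p + r * [:int p:] \<in> falling_ideal p"
    unfolding falling_ideal_def by (intro ideal_gen.add ideal_gen.mult ideal_gen.gen) auto
  then have "(\<Prod>i<p. [:- int (j * p + i), 1:]) \<in> falling_ideal p"
    unfolding r by (simp only: mult.commute)
  moreover have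
    "falling_poly (Suc j * p) = falling_poly (j * p) * (\<Prod>i<p. [:- int (j * p + i), 1:])"
    using falling_poly_add[of "j * p" p] by (simp only: mult_Suc add.commute)
  ultimately show ?case using Suc.IH by (simp only: ideal_pow_SucI)
qed simp

(* Legendre's formula, which reduces to its first term below p^2. *)
lemma multiplicity_fact_below_square:
  assumes "prime p" and "k < p * p"
  shows "multiplicity (int p) (fact k :: int) = k div p"
  using assms(2)
proof (induction k)
  case (Suc k)
  have prime_p: "prime (int p)" using assms(1) by (simp add: prime_nat_int_transfer)
  have "multiplicity (int p) (int (Suc k)) = (if p dvd Suc k then 1 else 0)"
  proof (cases "p dvd Suc k")
    case True
    then obtain t where t: "Suc k = p * t" ..
    with Suc.prems have "0 < t" "t < p" by (auto intro: gr0I)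
    then have "\<not> int p dvd int t" by (auto dest: dvd_imp_le)
    then have "multiplicity (int p) (int t) = 0" by (rule not_dvd_imp_multiplicity_0)
    then show ?thesis
      using True t \<open>0 < t\<close> prime_p by (simp add: prime_elem_multiplicity_mult_distrib)
  qed (simp add: not_dvd_imp_multiplicity_0 del: of_nat_Suc)
  moreover have "Suc k div p = k div p + (if p dvd Suc k then 1 else 0)"
    by (simp add: div_Suc dvd_eq_mod_eq_0)
  ultimately show ?case
    using Suc prime_p by (simp add: prime_elem_multiplicity_mult_distrib del: of_nat_Suc)
qed simp

lemma prime_power_dvd_of_dvd_mult_fact:
  assumes "prime p" and "k < p * p" and "int p ^ n dvd b * fact k"
  shows "int p ^ (n - k div p) dvd b"
proof (cases "b = 0")
  case False
  have prime_p: "prime (int p)" using assms(1) by (simp add: prime_nat_int_transfer)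
  then have not_unit: "\<not> is_unit (int p)" using not_prime_unit by blast
  have "n \<le> multiplicity (int p) (b * fact k)"
    using assms(3) False not_unit by (simp add: power_dvd_iff_le_multiplicity)
  also have "\<dots> = multiplicity (int p) b + k div p"
    using prime_p False assms(1,2)
    by (simp add: prime_elem_multiplicity_mult_distrib multiplicity_fact_below_square)
  finally show ?thesis
    using False not_unit by (simp add: power_dvd_iff_le_multiplicity)
qed simp

lemma smult_falling_poly_mem_falling_ideal_pow:
  assumes "prime p" and "n \<le> p" and "int p ^ n dvd b * fact k"
  shows "smult b (falling_poly k) \<in> ideal_pow (falling_ideal p) n"
proof -
  define j where "j = min n (k div p)"
  have "j * p \<le> k"
    unfolding j_def by (simp add: min_le_iff_disj nat_mult_min_left)
  then obtain Q where Q: "falling_poly k = falling_poly (j * p) * Q"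
    using falling_poly_dvd by blast
  have "int p ^ (n - j) dvd b"
  proof (cases "k div p < n")
    case True
    have "0 < p" using assms(1) by (simp add: prime_gt_0_nat)
    then have "k < Suc (k div p) * p"
      by (metis add.commute div_mult_mod_eq mod_less_divisor mult_Suc nat_add_left_cancel_less)
    also have "\<dots> \<le> p * p" using True assms(2) by (metis Suc_leI le_trans mult_le_mono1)
    finally show ?thesis
      using True assms(1,3) prime_power_dvd_of_dvd_mult_fact unfolding j_def by simp
  qed (simp add: j_def)
  then obtain c where c: "b = int p ^ (n - j) * c" ..
  have "[:int p:] \<in> falling_ideal p"
    unfolding falling_ideal_def by (simp add: ideal_gen.gen)
  with falling_poly_mult_mem_falling_ideal_pow
  have "[:int p:] ^ (n - j) * falling_poly (j * p) \<in> ideal_pow (falling_ideal p) (j + (n - j))"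
    by (rule ideal_pow_power_mult)
  then have "[:int p:] ^ (n - j) * falling_poly (j * p) \<in> ideal_pow (falling_ideal p) n"
    by (simp add: j_def)
  then have "Q * [:c:] * ([:int p:] ^ (n - j) * falling_poly (j * p))
      \<in> ideal_pow (falling_ideal p) n"
    by (rule ideal_pow_mult_left)
  moreover have "Q * [:c:] * ([:int p:] ^ (n - j) * falling_poly (j * p))
      = smult b (falling_poly k)"
    by (simp add: Q c poly_const_pow ac_simps)
  ultimately show ?thesis by simp
qed

lemma I_pn_subset_falling_ideal_pow:
  assumes "prime p" and "n \<le> p"
  shows "I_pn (int p) n \<subseteq> ideal_pow (falling_ideal p) n"
proof
  fix f assume f: "f \<in> I_pn (int p) n"
  have "\<forall>i\<ge>Suc (degree f). coeff f i = 0" by (simp add: coeff_eq_0)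
  then obtain b where b: "f = (\<Sum>k<Suc (degree f). smult (b k) (falling_poly k))"
    using falling_poly_expansion by blast
  have "\<forall>x. int p ^ n dvd poly (\<Sum>k<Suc (degree f). smult (b k) (falling_poly k)) x"
    using f unfolding I_pn_def b[symmetric] by blast
  then have "int p ^ n dvd b k * fact k" if "k < Suc (degree f)" for k
    using that by (rule falling_poly_coeff_dvd)
  then have "(\<Sum>k<Suc (degree f). smult (b k) (falling_poly k))
      \<in> ideal_pow (falling_ideal p) n"
    by (intro ideal_pow_sum smult_falling_poly_mem_falling_ideal_pow assms) auto
  then show "f \<in> ideal_pow (falling_ideal p) n" by (simp only: flip: b)
qed

lemma falling_ideal_pow_subset_I_pn:
  assumes "0 < p"
  shows "ideal_pow (falling_ideal p) n \<subseteq> I_pn (int p) n"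
  using ideal_pow_poly_dvd[OF poly_dvd_of_mem_falling_ideal[OF assms]]
  by (auto simp: I_pn_def)

theorem mainTheorem13:
  fixes p :: nat and n :: nat
  assumes "prime p" and "n > 0" and "p \<ge> n"
  shows "I_pn (int p) n =
    ideal_pow (ideal_gen {[:int p:], (\<Prod>i<p. [:- int i, 1:])}) n"
proof -
  have "0 < p" using assms(1) by (simp add: prime_gt_0_nat)
  then have "I_pn (int p) n = ideal_pow (falling_ideal p) n"
    using I_pn_subset_falling_ideal_pow[OF assms(1,3)] falling_ideal_pow_subset_I_pn by blast
  then show ?thesis by (simp add: falling_ideal_def falling_poly_def)
qed

end
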